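(* For every formula $\varphi$ of $\mathcal L^{\bigcirc}_\square$: $\varphi$ is derivable in $\mathbf{GLC}$ if and only if $\varphi$ is valid on every finite dynamic $\mathbf{GL}$ frame.
   Context: Fix a non-empty set $\mathsf{PV}$ of propositional variables. The language $\mathcal L^{\bigcirc}_\square$ is given by $\varphi::= p\mid \varphi\wedge\varphi\mid\neg\varphi\mid\square\varphi\mid\bigcirc\varphi$ with $p\in\mathsf{PV}$. Axioms and rules: Taut; K: $\square(\varphi\to\psi)\to(\square\varphi\to\square\psi)$; 4: $\square\varphi\to\square\square\varphi$; L: $\square(\square\varphi\to\varphi)\to\square\varphi$; ${\rm Next}_\neg$: $\neg\bigcirc\varphi\leftrightarrow\bigcirc\neg\varphi$; ${\rm Next}_\wedge$: $\bigcirc(\varphi\wedge\psi)\leftrightarrow\bigcirc\varphi\wedge\bigcirc\psi$; C: $\bigcirc\varphi\wedge\bigcirc\square\varphi\to\square\bigcirc\varphi$; rules modus ponens, ${\rm Nec}_\square$, ${\rm Nec}_\bigcirc$. $\mathbf{GLC}$ is axiomatised by Taut, K, 4, L, ${\rm Next}_\neg$, ${\rm Next}_\wedge$, C and closed under these rules. A dynamic Kripke frame is $\langle W,\sqsubset,f\rangle$ with $W$ non-empty, $\sqsubset$ a binary relation on $W$ and $f\colon W\to W$ weakly monotone: $w\sqsubset v$ implies $f(w)=f(v)$ or $f(w)\sqsubset f(v)$. It is a dynamic $\mathbf{GL}$ frame if $\sqsubset$ is transitive and converse well-founded (for finite $W$: transitive and irreflexive). Truth under a valuation: $w\models\square\varphi$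 iff $v\models\varphi$ for all $v$ with $w\sqsubset v$; $w\models\bigcirc\varphi$ iff $f(w)\models\varphi$; other clauses standard. Valid on a frame means true at all points under all valuations. *)

theory Defs
  imports Main
begin

datatype 'v fm = Var 'v | And "'v fm" "'v fm" | Neg "'v fm" | Box "'v fm" | Next "'v fm"

definition Or :: "'v fm \<Rightarrow> 'v fm \<Rightarrow> 'v fm" where
  "Or a b = Neg (And (Neg a) (Neg b))"
definition Imp :: "'v fm \<Rightarrow> 'v fm \<Rightarrow> 'v fm" where
  "Imp a b = Neg (And a (Neg b))"
definition Iff :: "'v fm \<Rightarrow> 'v fm \<Rightarrow> 'v fm" where
  "Iff a b = And (Imp a b) (Imp b a)"

fun peval :: "('v fm \<Rightarrow> bool) \<Rightarrow> 'v fm \<Rightarrow> bool" where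
  "peval g (Var p) = g (Var p)"
| "peval g (And a b) = (peval g a \<and> peval g b)"
| "peval g (Neg a) = (\<not> peval g a)"
| "peval g (Box a) = g (Box a)"
| "peval g (Next a) = g (Next a)"

definition taut :: "'v fm \<Rightarrow> bool" where
  "taut \<phi> = (\<forall>g. peval g \<phi>)"

inductive GLC :: "'v fm \<Rightarrow> bool" where
  Taut: "taut \<phi> \<Longrightarrow> GLC \<phi>"
| K: "GLC (Imp (Box (Imp \<phi> \<psi>)) (Imp (Box \<phi>) (Box \<psi>)))"
| Four: "GLC (Imp (Box \<phi>) (Box (Box \<phi>)))"
| L: "GLC (Imp (Box (Imp (Box \<phi>) \<phi>)) (Box \<phi>))"
| NextNeg: "GLC (Iff (Neg (Next \<phi>)) (Next (Neg \<phi>)))"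
| NextAnd: "GLC (Iff (Next (And \<phi> \<psi>)) (And (Next \<phi>) (Next \<psi>)))"
| C: "GLC (Imp (And (Next \<phi>) (Next (Box \<phi>))) (Box (Next \<phi>)))"
| MP: "GLC (Imp \<phi> \<psi>) \<Longrightarrow> GLC \<phi> \<Longrightarrow> GLC \<psi>"
| NecBox: "GLC \<phi> \<Longrightarrow> GLC (Box \<phi>)"
| NecNext: "GLC \<phi> \<Longrightarrow> GLC (Next \<phi>)"

definition dynamic_frame :: "'w set \<Rightarrow> ('w \<Rightarrow> 'w \<Rightarrow> bool) \<Rightarrow> ('w \<Rightarrow> 'w) \<Rightarrow> bool" where
  "dynamic_frame W R f \<longleftrightarrow> W \<noteq> {} \<and>
     (\<forall>w\<in>W. f w \<in> W) \<and>
     (\<forall>w\<in>W. \<forall>v\<in>W. R w v \<longrightarrow> f w = f v \<or> R (f w) (f v))"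

definition finite_dynamic_GL_frame :: "'w set \<Rightarrow> ('w \<Rightarrow> 'w \<Rightarrow> bool) \<Rightarrow> ('w \<Rightarrow> 'w) \<Rightarrow> bool" where
  "finite_dynamic_GL_frame W R f \<longleftrightarrow> dynamic_frame W R f \<and> finite W \<and>
     (\<forall>u\<in>W. \<forall>v\<in>W. \<forall>w\<in>W. R u v \<longrightarrow> R v w \<longrightarrow> R u w) \<and> (\<forall>w\<in>W. \<not> R w w)"

fun sat :: "'w set \<Rightarrow> ('w \<Rightarrow> 'w \<Rightarrow> bool) \<Rightarrow> ('w \<Rightarrow> 'w) \<Rightarrow> ('v \<Rightarrow> 'w set) \<Rightarrow> 'w \<Rightarrow> 'v fm \<Rightarrow> bool" where
  "sat W R f V w (Var p) = (w \<in> V p)"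
| "sat W R f V w (And a b) = (sat W R f V w a \<and> sat W R f V w b)"
| "sat W R f V w (Neg a) = (\<not> sat W R f V w a)"
| "sat W R f V w (Box a) = (\<forall>v\<in>W. R w v \<longrightarrow> sat W R f V v a)"
| "sat W R f V w (Next a) = sat W R f V (f w) a"

definition valid_on :: "'w set \<Rightarrow> ('w \<Rightarrow> 'w \<Rightarrow> bool) \<Rightarrow> ('w \<Rightarrow> 'w) \<Rightarrow> 'v fm \<Rightarrow> bool" where
  "valid_on W R f \<phi> \<longleftrightarrow> (\<forall>V. \<forall>w\<in>W. sat W R f V w \<phi>)"

end

theory Submission
  imports Defs "HOL-Library.Sublist"
begin

text \<open>Soundness is routine: Loeb's axiom holds because a finite transitive irreflexive relation
  is converse well-founded.

  For completeness, a non-theorem \<open>\<phi>\<close> is refuted in a finite model built from maximal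
  consistent sets. A world at time \<open>k \<le> next_depth \<phi>\<close> is a finite chain of maximal consistent
  sets, grown at its head by witnesses for the boxed subformulas of \<open>\<phi>\<close>; accessibility is strict
  extension of chains, hence transitive and irreflexive. By Loeb's axiom a witness for a missing
  \<open>Box \<psi>\<close> can be chosen to contain \<open>Box \<psi>\<close>, so every witness step enlarges the set of boxed
  subformulas of \<open>\<phi>\<close> true at the head, and there are only finitely many chains. The dynamics
  maps a chain at time \<open>k\<close> to the chain of the \<open>Next\<close>-parts of its members at time \<open>k + 1\<close>,
  with adjacent duplicates merged: axiom C makes the \<open>Next\<close>-parts of two related sets either
  equal or related, which is exactly weak monotonicity.\<close>

section \<open>Soundness\<close>

lemma sat_Imp [simp]: "sat W R f V w (Imp a b) \<longleftrightarrow> (sat W R f V w a \<longrightarrow> sat W R f V w b)"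
  by (simp add: Imp_def)

lemma sat_Iff [simp]: "sat W R f V w (Iff a b) \<longleftrightarrow> (sat W R f V w a \<longleftrightarrow> sat W R f V w b)"
  by (auto simp add: Iff_def)

lemma sat_peval: "sat W R f V w \<phi> \<longleftrightarrow> peval (sat W R f V w) \<phi>"
  by (induction \<phi>) (simp_all only: sat.simps peval.simps)

lemma finite_dynamic_GL_frameD:
  assumes "finite_dynamic_GL_frame W R f"
  shows "finite W" and "w \<in> W \<Longrightarrow> f w \<in> W"
    and "w \<in> W \<Longrightarrow> v \<in> W \<Longrightarrow> R w v \<Longrightarrow> f w = f v \<or> R (f w) (f v)"
    and "u \<in> W \<Longrightarrow> v \<in> W \<Longrightarrow> w \<in> W \<Longrightarrow> R u v \<Longrightarrow> R v w \<Longrightarrow> R u w"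
    and "w \<in> W \<Longrightarrow> \<not> R w w"
  using assms unfolding finite_dynamic_GL_frame_def dynamic_frame_def by blast+

lemma wf_finite_strict_order_on:
  assumes "finite W" and "\<forall>u\<in>W. \<forall>v\<in>W. \<forall>w\<in>W. R u v \<longrightarrow> R v w \<longrightarrow> R u w"
    and "\<forall>w\<in>W. \<not> R w w"
  shows "wf {(v, u). u \<in> W \<and> v \<in> W \<and> R u v}"
proof (rule wf_finite_segments)
  show "finite {v. (v, u) \<in> {(v, u). u \<in> W \<and> v \<in> W \<and> R u v}}" for u
    using assms(1) by (auto intro: rev_finite_subset)
qed (use assms(2,3) in \<open>auto simp: irrefl_def trans_def\<close>)

lemma sat_Loeb:
  assumes F: "finite_dynamic_GL_frame W R f" and w: "w \<in> W"
  shows "sat W R f V w (Imp (Box (Imp (Box \<phi>) \<phi>)) (Box \<phi>))"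
proof (simp only: sat_Imp, intro impI)
  assume H: "sat W R f V w (Box (Imp (Box \<phi>) \<phi>))"
  have wf: "wf {(v, u). u \<in> W \<and> v \<in> W \<and> R u v}"
    using finite_dynamic_GL_frameD[OF F] by (intro wf_finite_strict_order_on) blast+
  have "sat W R f V v \<phi>" if "v \<in> W" "R w v" for v
    using wf that
  proof (induction v rule: wf_induct_rule)
    case (less v)
    have "sat W R f V u \<phi>" if "u \<in> W" "R v u" for u
    proof -
      have "R w u" using finite_dynamic_GL_frameD(4)[OF F w] less.prems that by blast
      then show ?thesis using less.IH that less.prems by blast
    qed
    then have "sat W R f V v (Box \<phi>)" by simp
    then show ?case using H less.prems by simp
  qed
  then show "sat W R f V w (Box \<phi>)" by simp
qed

theorem soundness:
  assumes "GLC \<phi>" and F: "finite_dynamic_GL_frame W R f"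
  shows "valid_on W R f \<phi>"
  using assms(1) unfolding valid_on_def
proof (induction rule: GLC.induct)
  case (Taut \<phi>)
  then show ?case by (metis sat_peval taut_def)
next
  case (Four \<phi>)
  have "sat W R f V u \<phi>" if "sat W R f V w (Box \<phi>)" "w \<in> W" "v \<in> W" "u \<in> W" "R w v" "R v u"
    for V w v u
    using that finite_dynamic_GL_frameD(4)[OF F, of w v u] by simp
  then show ?case by auto
next
  case (L \<phi>)
  then show ?case using sat_Loeb[OF F] by blast
next
  case (C \<phi>)
  have "sat W R f V (f v) \<phi>" if "sat W R f V w (And (Next \<phi>) (Next (Box \<phi>)))" "w \<in> W" "v \<in> W" "R w v"
    for V w v
    using that finite_dynamic_GL_frameD(2)[OF F, of v] finite_dynamic_GL_frameD(3)[OF F, of w v] by auto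
  then show ?case by auto
next
  case (NecNext \<phi>)
  then show ?case using finite_dynamic_GL_frameD(2)[OF F] by simp
qed simp_all

section \<open>Transfer to frames on the naturals\<close>

lemma sat_pullback:
  assumes "\<forall>w\<in>W. g (h w) = w" and "\<forall>w\<in>W. f w \<in> W" and "w \<in> W"
  shows "sat (h ` W) (\<lambda>i j. R (g i) (g j)) (\<lambda>i. h (f (g i))) (\<lambda>p. {i. g i \<in> V p}) (h w) \<phi>
    \<longleftrightarrow> sat W R f V w \<phi>"
  using assms(3)
proof (induction \<phi> arbitrary: w)
  case (Box a)
  have "(\<forall>j\<in>h ` W. P j) \<longleftrightarrow> (\<forall>v\<in>W. P (h v))" for P by blast
  then show ?case using Box assms(1) by simp
qed (simp_all add: assms(1,2))

lemma finite_dynamic_GL_frame_pullback: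
  assumes gh: "\<forall>w\<in>W. g (h w) = w" and F: "finite_dynamic_GL_frame W R f"
  shows "finite_dynamic_GL_frame (h ` W) (\<lambda>i j. R (g i) (g j)) (\<lambda>i. h (f (g i)))"
proof -
  note D = finite_dynamic_GL_frameD[OF F]
  have ball: "(\<forall>i\<in>h ` W. P i) \<longleftrightarrow> (\<forall>w\<in>W. P (h w))" for P by blast
  have "h ` W \<noteq> {}" using F unfolding finite_dynamic_GL_frame_def dynamic_frame_def by blast
  moreover have "\<forall>w\<in>W. h (f (g (h w))) \<in> h ` W" using gh D(2) by simp
  moreover have "h (f (g (h w))) = h (f (g (h v))) \<or>
      R (g (h (f (g (h w))))) (g (h (f (g (h v)))))"
    if "w \<in> W" "v \<in> W" "R (g (h w)) (g (h v))" for w v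
    using that D(3)[of w v] by (auto simp: gh D(2))
  moreover have "R (g (h u)) (g (h w))"
    if "u \<in> W" "v \<in> W" "w \<in> W" "R (g (h u)) (g (h v))" "R (g (h v)) (g (h w))" for u v w
    using that D(4)[of u v w] by (simp add: gh)
  moreover have "\<not> R (g (h w)) (g (h w))" if "w \<in> W" for w
    using that D(5) by (simp add: gh)
  ultimately show ?thesis
    unfolding finite_dynamic_GL_frame_def dynamic_frame_def ball using D(1) by blast
qed

lemma refuted_on_nat_frame:
  assumes F: "finite_dynamic_GL_frame (W :: 'w set) R f" and "\<not> valid_on W R f \<phi>"
  shows "\<exists>(W' :: nat set) R' f'. finite_dynamic_GL_frame W' R' f' \<and> \<not> valid_on W' R' f' \<phi>"
proof -
  obtain h :: "'w \<Rightarrow> nat" where "inj_on h W"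
    using finite_imp_inj_to_nat_seg[OF finite_dynamic_GL_frameD(1)[OF F]] by blast
  then have inv: "\<forall>w\<in>W. inv_into W h (h w) = w" by simp
  obtain V w where w: "w \<in> W" "\<not> sat W R f V w \<phi>" using assms(2) unfolding valid_on_def by blast
  have "\<forall>w\<in>W. f w \<in> W" using finite_dynamic_GL_frameD(2)[OF F] by blast
  note sat = sat_pullback[where g = "inv_into W h" and h = h, OF inv this w(1)]
  have "h w \<in> h ` W" using w(1) by blast
  then show ?thesis
    using finite_dynamic_GL_frame_pullback[where g = "inv_into W h" and h = h, OF inv F] sat w(2)
    unfolding valid_on_def by blast
qed

section \<open>Maximal consistent sets\<close>

definition Top :: "'v fm" where
  "Top = Neg (And (Var undefined) (Neg (Var undefined)))"

fun conjs :: "'v fm list \<Rightarrow> 'v fm" where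
  "conjs [] = Top"
| "conjs (a # L) = And a (conjs L)"

lemma peval_conjs: "peval g (conjs L) \<longleftrightarrow> (\<forall>a\<in>set L. peval g a)"
  by (induction L) (auto simp: Top_def)

lemma peval_Imp [simp]: "peval g (Imp a b) \<longleftrightarrow> (peval g a \<longrightarrow> peval g b)"
  by (simp add: Imp_def)

lemma peval_Or [simp]: "peval g (Or a b) \<longleftrightarrow> peval g a \<or> peval g b"
  by (simp add: Or_def)

lemma GLC_taut_mp: "GLC a \<Longrightarrow> taut (Imp a b) \<Longrightarrow> GLC b"
  by (rule GLC.MP[OF GLC.Taut])

definition consistent :: "'v fm set \<Rightarrow> bool" where
  "consistent S \<longleftrightarrow> (\<forall>L. set L \<subseteq> S \<longrightarrow> \<not> GLC (Neg (conjs L)))"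

definition mcs :: "'v fm set \<Rightarrow> bool" where
  "mcs G \<longleftrightarrow> (\<forall>a. GLC a \<longrightarrow> a \<in> G) \<and> (\<forall>a b. And a b \<in> G \<longleftrightarrow> a \<in> G \<and> b \<in> G)
     \<and> (\<forall>a. Neg a \<in> G \<longleftrightarrow> a \<notin> G)"

lemma mcs_GLC: "mcs G \<Longrightarrow> GLC a \<Longrightarrow> a \<in> G"
  by (simp add: mcs_def)

lemma mcs_And [simp]: "mcs G \<Longrightarrow> And a b \<in> G \<longleftrightarrow> a \<in> G \<and> b \<in> G"
  by (simp add: mcs_def)

lemma mcs_Neg [simp]: "mcs G \<Longrightarrow> Neg a \<in> G \<longleftrightarrow> a \<notin> G"
  by (simp add: mcs_def)

lemma mcs_Imp [simp]: "mcs G \<Longrightarrow> Imp a b \<in> G \<longleftrightarrow> (a \<in> G \<longrightarrow> b \<in> G)"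
  by (simp add: Imp_def)

lemma mcs_Or [simp]: "mcs G \<Longrightarrow> Or a b \<in> G \<longleftrightarrow> a \<in> G \<or> b \<in> G"
  by (simp add: Or_def)

lemma mcs_Iff [simp]: "mcs G \<Longrightarrow> Iff a b \<in> G \<longleftrightarrow> (a \<in> G \<longleftrightarrow> b \<in> G)"
  by (auto simp: Iff_def)

lemma mcs_if_maximal_consistent:
  assumes cons: "consistent M" and max: "\<And>a. consistent (insert a M) \<Longrightarrow> a \<in> M"
  shows "mcs M"
proof -
  have outside: "\<exists>L. set L \<subseteq> M \<and> GLC (Imp (conjs L) (Neg a))" if "a \<notin> M" for a
  proof -
    obtain L where L: "set L \<subseteq> insert a M" "GLC (Neg (conjs L))"
      using max \<open>a \<notin> M\<close> consistent_def by blast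
    have "taut (Imp (Neg (conjs L)) (Imp (conjs (filter (\<lambda>b. b \<noteq> a) L)) (Neg a)))"
      unfolding taut_def by (auto simp: peval_conjs)
    moreover have "set (filter (\<lambda>b. b \<noteq> a) L) \<subseteq> M" using L(1) by auto
    ultimately show ?thesis using L(2) GLC_taut_mp by blast
  qed
  have closed: "a \<in> M" if L: "set L \<subseteq> M" and a: "GLC (Imp (conjs L) a)" for L a
  proof (rule ccontr)
    assume "a \<notin> M"
    then obtain L' where L': "set L' \<subseteq> M" "GLC (Imp (conjs L') (Neg a))"
      using outside by blast
    have "taut (Imp (Imp (conjs L) a) (Imp (Imp (conjs L') (Neg a)) (Neg (conjs (L @ L')))))"
      unfolding taut_def by (auto simp: peval_conjs)
    then have "GLC (Neg (conjs (L @ L')))"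
      using GLC.MP[OF GLC_taut_mp] a L'(2) by blast
    moreover have "set (L @ L') \<subseteq> M" using L L'(1) by simp
    ultimately show False using cons unfolding consistent_def by blast
  qed
  have "GLC a \<Longrightarrow> a \<in> M" for a
    using closed[of "[]" a] GLC_taut_mp[of a "Imp (conjs []) a"] by (simp add: taut_def)
  moreover have "And a b \<in> M \<longleftrightarrow> a \<in> M \<and> b \<in> M" for a b
  proof -
    have "GLC (Imp (conjs [And a b]) a)" "GLC (Imp (conjs [And a b]) b)"
      and "GLC (Imp (conjs [a, b]) (And a b))"
      by (auto intro!: GLC.Taut simp: taut_def Top_def)
    then show ?thesis using closed[of "[And a b]" a] closed[of "[And a b]" b] closed[of "[a, b]"]
      by (metis empty_subsetI insert_subset list.set)
  qed
  moreover have "Neg a \<in> M \<longleftrightarrow> a \<notin> M" for a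
  proof
    assume "Neg a \<in> M"
    have "GLC (Neg (conjs [a, Neg a]))" by (auto intro: GLC.Taut simp: taut_def)
    then have "\<not> set [a, Neg a] \<subseteq> M" using cons unfolding consistent_def by blast
    then show "a \<notin> M" using \<open>Neg a \<in> M\<close> by simp
  next
    assume "a \<notin> M"
    then obtain L where "set L \<subseteq> M" "GLC (Imp (conjs L) (Neg a))" using outside by blast
    then show "Neg a \<in> M" by (rule closed)
  qed
  ultimately show ?thesis unfolding mcs_def by blast
qed

lemma lindenbaum:
  assumes "consistent S"
  obtains M where "S \<subseteq> M" "mcs M"
proof -
  let ?A = "{T. S \<subseteq> T \<and> consistent T}"
  have "\<exists>M\<in>?A. \<forall>X\<in>?A. M \<subseteq> X \<longrightarrow> X = M"
  proof (rule subset_Zorn_nonempty)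
    show "?A \<noteq> {}" using assms by blast
  next
    fix C assume C: "C \<noteq> {}" "subset.chain ?A C"
    have "\<not> GLC (Neg (conjs L))" if L: "set L \<subseteq> \<Union>C" for L
    proof -
      obtain X where "X \<in> C" "set L \<subseteq> X"
        using finite_subset_Union_chain[OF _ L C] by blast
      then show ?thesis using C(2) unfolding subset.chain_def consistent_def by blast
    qed
    then show "\<Union>C \<in> ?A" using C unfolding subset.chain_def consistent_def by blast
  qed
  then obtain M where M: "M \<in> ?A" "\<forall>X\<in>?A. M \<subseteq> X \<longrightarrow> X = M" by blast
  have "mcs M"
  proof (rule mcs_if_maximal_consistent)
    show "consistent M" using M(1) by blast
    show "a \<in> M" if "consistent (insert a M)" for a
      using M that by blast
  qed
  with M(1) that show ?thesis by blast
qed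

lemma consistent_Neg:
  assumes "\<not> GLC \<phi>"
  shows "consistent {Neg \<phi>}"
  unfolding consistent_def
proof (intro allI impI notI)
  fix L assume "set L \<subseteq> {Neg \<phi>}" and "GLC (Neg (conjs L))"
  moreover from \<open>set L \<subseteq> {Neg \<phi>}\<close> have "taut (Imp (Neg (conjs L)) \<phi>)"
    unfolding taut_def by (auto simp: peval_conjs)
  ultimately show False using assms GLC_taut_mp by blast
qed

definition canon_rel :: "'v fm set \<Rightarrow> 'v fm set \<Rightarrow> bool" where
  "canon_rel G D \<longleftrightarrow> (\<forall>\<psi>. Box \<psi> \<in> G \<longrightarrow> \<psi> \<in> D \<and> Box \<psi> \<in> D)"

definition next_set :: "'v fm set \<Rightarrow> 'v fm set" where
  "next_set G = {\<psi>. Next \<psi> \<in> G}"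

lemma canon_rel_trans: "canon_rel A B \<Longrightarrow> canon_rel B C \<Longrightarrow> canon_rel A C"
  unfolding canon_rel_def by blast

lemma mcs_next_set:
  assumes "mcs G"
  shows "mcs (next_set G)"
proof -
  have "a \<in> next_set G" if "GLC a" for a
    using mcs_GLC[OF assms GLC.NecNext[OF that]] by (simp add: next_set_def)
  moreover have "And a b \<in> next_set G \<longleftrightarrow> a \<in> next_set G \<and> b \<in> next_set G" for a b
    using mcs_GLC[OF assms GLC.NextAnd[of a b]] assms by (simp add: next_set_def)
  moreover have "Neg a \<in> next_set G \<longleftrightarrow> a \<notin> next_set G" for a
    using mcs_GLC[OF assms GLC.NextNeg[of a]] assms by (simp add: next_set_def)
  ultimately show ?thesis unfolding mcs_def by blast
qed

lemma mcs_Box_mono: "mcs G \<Longrightarrow> GLC (Imp a b) \<Longrightarrow> Box a \<in> G \<Longrightarrow> Box b \<in> G"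
  using mcs_GLC[OF _ GLC.K] mcs_GLC[OF _ GLC.NecBox] by (metis mcs_Imp)

lemma mcs_Box_conjs:
  assumes "mcs G" "\<forall>a\<in>set L. Box a \<in> G"
  shows "Box (conjs L) \<in> G"
  using assms(2)
proof (induction L)
  case Nil
  show ?case using mcs_GLC[OF assms(1) GLC.NecBox[OF GLC.Taut]] by (simp add: taut_def Top_def)
next
  case (Cons a L)
  have "GLC (Imp a (Imp (conjs L) (And a (conjs L))))" by (simp add: GLC.Taut taut_def)
  then have "Box (Imp (conjs L) (And a (conjs L))) \<in> G"
    using mcs_Box_mono[OF assms(1)] Cons.prems by simp
  then show ?case using mcs_GLC[OF assms(1) GLC.K[of "conjs L"]] assms(1) Cons by simp
qed

lemma box_witness_exists:
  assumes A: "mcs A" and "Box \<psi> \<notin> A"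
  shows "\<exists>B. mcs B \<and> canon_rel A B \<and> Box \<psi> \<in> B \<and> \<psi> \<notin> B"
proof -
  let ?S = "{\<chi>. Box \<chi> \<in> A} \<union> Box ` {\<chi>. Box \<chi> \<in> A} \<union> {Box \<psi>, Neg \<psi>}"
  have "consistent ?S"
    unfolding consistent_def
  proof (intro allI impI notI)
    fix L assume L: "set L \<subseteq> ?S" and incons: "GLC (Neg (conjs L))"
    let ?L = "filter (\<lambda>\<chi>. Box \<chi> \<in> A) L"
    have "Box (Box \<chi>) \<in> A" if "Box \<chi> \<in> A" for \<chi>
      using mcs_GLC[OF A GLC.Four[of \<chi>]] A that by simp
    then have "\<forall>\<chi>\<in>set L. Box \<chi> \<in> A \<or> \<chi> = Box \<psi> \<or> \<chi> = Neg \<psi>"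
      using L by blast
    then have "taut (Imp (Neg (conjs L)) (Imp (conjs ?L) (Imp (Box \<psi>) \<psi>)))"
      unfolding taut_def by (auto simp: peval_conjs)
    then have "GLC (Imp (conjs ?L) (Imp (Box \<psi>) \<psi>))" using incons GLC_taut_mp by blast
    moreover have "Box (conjs ?L) \<in> A" using mcs_Box_conjs[OF A] by simp
    ultimately have "Box (Imp (Box \<psi>) \<psi>) \<in> A" using mcs_Box_mono[OF A] by blast
    then have "Box \<psi> \<in> A" using mcs_GLC[OF A GLC.L[of \<psi>]] A by simp
    with \<open>Box \<psi> \<notin> A\<close> show False by blast
  qed
  then obtain B where "?S \<subseteq> B" "mcs B" using lindenbaum by blast
  then show ?thesis unfolding canon_rel_def by auto
qed

lemma canon_rel_next_set:
  assumes G: "mcs G" and D: "mcs D" and GD: "canon_rel G D"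
    and "next_set G \<noteq> next_set D"
  shows "canon_rel (next_set G) (next_set D)"
proof -
  have nG: "mcs (next_set G)" and nD: "mcs (next_set D)" using mcs_next_set G D by auto
  then obtain \<chi> where \<chi>: "\<chi> \<in> next_set G" "\<chi> \<notin> next_set D"
    using \<open>next_set G \<noteq> next_set D\<close> by (metis mcs_Neg subsetI subset_antisym)
  have "\<psi> \<in> next_set D" if "Box \<psi> \<in> next_set G" for \<psi>
  proof -
    have "Or \<psi> \<chi> \<in> next_set G" using \<chi>(1) nG by simp
    moreover have "Box (Or \<psi> \<chi>) \<in> next_set G"
      using mcs_Box_mono[OF nG GLC.Taut, of \<psi> "Or \<psi> \<chi>"] that by (simp add: taut_def)
    ultimately have "Box (Next (Or \<psi> \<chi>)) \<in> G"
      using mcs_GLC[OF G GLC.C[of "Or \<psi> \<chi>"]] G by (simp add: next_set_def)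
    then have "Or \<psi> \<chi> \<in> next_set D" using GD unfolding canon_rel_def next_set_def by blast
    then show ?thesis using \<chi>(2) nD by simp
  qed
  moreover have "Box (Box \<psi>) \<in> next_set G" if "Box \<psi> \<in> next_set G" for \<psi>
    using mcs_GLC[OF nG GLC.Four[of \<psi>]] nG that by simp
  ultimately show ?thesis unfolding canon_rel_def by blast
qed

section \<open>The finite countermodel\<close>

lemma successively_hd_strict_suffix:
  assumes "successively P ys" and "transp P" and "strict_suffix xs ys" and "xs \<noteq> []"
  shows "P (hd ys) (hd xs)"
proof -
  obtain zs where ys: "ys = zs @ xs" "zs \<noteq> []"
    using assms(3) unfolding strict_suffix_def suffix_def by auto
  have "sorted_wrt P (zs @ xs)" using assms(1,2) ys(1) by (simp add: successively_conv_sorted_wrt)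
  then show ?thesis using ys assms(4) by (simp add: sorted_wrt_append)
qed

lemma successively_remdups_adj_map:
  assumes "successively P xs"
    and "\<And>x y. x \<in> set xs \<Longrightarrow> y \<in> set xs \<Longrightarrow> P x y \<Longrightarrow> f x = f y \<or> Q (f x) (f y)"
  shows "successively Q (remdups_adj (map f xs))"
proof -
  have "successively (\<lambda>x y. x = y \<or> Q x y) (map f xs)"
    unfolding successively_map using assms by (rule successively_mono)
  then have "successively (\<lambda>x y. x = y \<or> Q x y) (remdups_adj (map f xs))"
    by (simp add: successively_remdups_adj_iff)
  moreover have "distinct_adj (remdups_adj (map f xs))" by simp
  ultimately show ?thesis unfolding distinct_adj_def successively_conv_nth by blast
qed

fun subformulas :: "'v fm \<Rightarrow> 'v fm set" where
  "subformulas (Var p) = {Var p}"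
| "subformulas (And a b) = insert (And a b) (subformulas a \<union> subformulas b)"
| "subformulas (Neg a) = insert (Neg a) (subformulas a)"
| "subformulas (Box a) = insert (Box a) (subformulas a)"
| "subformulas (Next a) = insert (Next a) (subformulas a)"

lemma finite_subformulas: "finite (subformulas a)"
  by (induction a) auto

fun next_depth :: "'v fm \<Rightarrow> nat" where
  "next_depth (Var p) = 0"
| "next_depth (And a b) = max (next_depth a) (next_depth b)"
| "next_depth (Neg a) = next_depth a"
| "next_depth (Box a) = next_depth a"
| "next_depth (Next a) = Suc (next_depth a)"

definition mcs_path :: "'v fm set list \<Rightarrow> bool" where
  "mcs_path p \<longleftrightarrow> p \<noteq> [] \<and> (\<forall>A\<in>set p. mcs A) \<and> successively (\<lambda>B A. canon_rel A B) p"

lemma mcs_path_hd_strict_suffix: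
  "mcs_path q \<Longrightarrow> strict_suffix p q \<Longrightarrow> p \<noteq> [] \<Longrightarrow> canon_rel (hd p) (hd q)"
  unfolding mcs_path_def
  by (rule successively_hd_strict_suffix[where P = "\<lambda>B A. canon_rel A B"])
    (auto simp: transp_def intro: canon_rel_trans)

definition next_path :: "'v fm set list \<Rightarrow> 'v fm set list" where
  "next_path p = remdups_adj (map next_set p)"

lemma hd_next_path: "p \<noteq> [] \<Longrightarrow> hd (next_path p) = next_set (hd p)"
  by (simp add: next_path_def hd_map)

lemma mcs_path_next_path:
  assumes "mcs_path p"
  shows "mcs_path (next_path p)"
proof -
  have "successively (\<lambda>B A. canon_rel A B) (next_path p)"
    unfolding next_path_def
  proof (rule successively_remdups_adj_map)
    show "successively (\<lambda>B A. canon_rel A B) p" using assms by (simp add: mcs_path_def)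
    show "next_set B = next_set A \<or> canon_rel (next_set A) (next_set B)"
      if "B \<in> set p" "A \<in> set p" "canon_rel A B" for A B
      using that assms canon_rel_next_set[of A B] unfolding mcs_path_def by blast
  qed
  then show ?thesis using assms mcs_next_set unfolding mcs_path_def next_path_def by auto
qed

lemma suffix_next_path: "suffix p q \<Longrightarrow> suffix (next_path p) (next_path q)"
  unfolding next_path_def by (intro suffix_remdups_adj map_mono_suffix)

definition witness :: "'v fm set \<Rightarrow> 'v fm \<Rightarrow> 'v fm set" where
  "witness A \<psi> = (SOME B. mcs B \<and> canon_rel A B \<and> Box \<psi> \<in> B \<and> \<psi> \<notin> B)"

lemma witness_spec:
  assumes "mcs A" and "Box \<psi> \<notin> A"
  shows "mcs (witness A \<psi>)" and "canon_rel A (witness A \<psi>)"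
    and "Box \<psi> \<in> witness A \<psi>" and "\<psi> \<notin> witness A \<psi>"
  using someI_ex[OF box_witness_exists[OF assms]] unfolding witness_def by blast+

inductive_set witness_closure :: "'v fm set \<Rightarrow> 'v fm set list set \<Rightarrow> 'v fm set list set"
  for BS S where
  base: "p \<in> S \<Longrightarrow> p \<in> witness_closure BS S"
| step: "p \<in> witness_closure BS S \<Longrightarrow> \<psi> \<in> BS \<Longrightarrow> Box \<psi> \<notin> hd p \<Longrightarrow>
    witness (hd p) \<psi> # p \<in> witness_closure BS S"

lemma mcs_path_witness_closure:
  assumes "p \<in> witness_closure BS S" and "\<forall>q\<in>S. mcs_path q"
  shows "mcs_path p"
  using assms
proof (induction rule: witness_closure.induct)
  case (step p \<psi>)
  then have "mcs (hd p)" "p \<noteq> []" by (auto simp: mcs_path_def)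
  then show ?case using step witness_spec[of "hd p" \<psi>] by (auto simp: mcs_path_def successively_Cons)
qed simp

definition witness_step :: "'v fm set \<Rightarrow> 'v fm set list set \<Rightarrow> 'v fm set list set" where
  "witness_step BS T = {witness (hd p) \<psi> # p | p \<psi>. p \<in> T \<and> \<psi> \<in> BS \<and> Box \<psi> \<notin> hd p}"

lemma finite_witness_step_power:
  assumes "finite T" and "finite BS"
  shows "finite ((witness_step BS ^^ n) T)"
proof (induction n)
  case (Suc n)
  have "witness_step BS ((witness_step BS ^^ n) T)
      \<subseteq> (\<lambda>(p, \<psi>). witness (hd p) \<psi> # p) ` ((witness_step BS ^^ n) T \<times> BS)"
    unfolding witness_step_def by auto
  then show ?case using Suc assms(2) by (auto intro: finite_subset)
qed (simp add: assms(1))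

lemma witness_closure_in_witness_step_power:
  assumes "p \<in> witness_closure BS S" and "\<forall>q\<in>S. mcs_path q" and "finite BS"
  shows "\<exists>n\<le>card {\<chi>\<in>BS. Box \<chi> \<in> hd p}. p \<in> (witness_step BS ^^ n) S"
  using assms
proof (induction rule: witness_closure.induct)
  case (base p)
  then show ?case by (intro exI[of _ 0]) auto
next
  case (step p \<psi>)
  then obtain n where n: "n \<le> card {\<chi>\<in>BS. Box \<chi> \<in> hd p}" "p \<in> (witness_step BS ^^ n) S"
    by blast
  have "mcs (hd p)" using mcs_path_witness_closure[OF step.hyps(1) step.prems(1)]
    by (auto simp: mcs_path_def)
  then have "{\<chi>\<in>BS. Box \<chi> \<in> hd p} \<subset> {\<chi>\<in>BS. Box \<chi> \<in> witness (hd p) \<psi>}"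
    using witness_spec[of "hd p" \<psi>] step.hyps(2,3) unfolding canon_rel_def by blast
  then have "card {\<chi>\<in>BS. Box \<chi> \<in> hd p} < card {\<chi>\<in>BS. Box \<chi> \<in> witness (hd p) \<psi>}"
    using step.prems(2) by (simp add: psubset_card_mono)
  moreover have "witness (hd p) \<psi> # p \<in> (witness_step BS ^^ Suc n) S"
    using n(2) step.hyps(2,3) unfolding witness_step_def by auto
  ultimately show ?case using n(1) by (intro exI[of _ "Suc n"]) auto
qed

lemma finite_witness_closure:
  assumes "finite S" and "\<forall>q\<in>S. mcs_path q" and "finite BS"
  shows "finite (witness_closure BS S)"
proof -
  have "card {\<chi>\<in>BS. Box \<chi> \<in> A} \<le> card BS" for A
    using assms(3) by (simp add: card_mono)
  then have "witness_closure BS S \<subseteq> (\<Union>n\<le>card BS. (witness_step BS ^^ n) S)"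
    using witness_closure_in_witness_step_power[OF _ assms(2,3)] by (fastforce intro: le_trans)
  moreover have "finite (\<Union>n\<le>card BS. (witness_step BS ^^ n) S)"
    using finite_witness_step_power assms(1,3) by blast
  ultimately show ?thesis by (rule finite_subset)
qed

locale canonical_countermodel =
  fixes G0 :: "'v fm set" and \<phi> :: "'v fm"
  assumes mcs_G0: "mcs G0"
begin

definition BS :: "'v fm set" where
  "BS = {\<psi>. Box \<psi> \<in> subformulas \<phi>}"

lemma finite_BS: "finite BS"
proof -
  have "BS \<subseteq> (\<lambda>a. case a of Box \<psi> \<Rightarrow> \<psi> | _ \<Rightarrow> a) ` subformulas \<phi>"
    unfolding BS_def by (auto intro: image_eqI[where x = "Box _"])
  then show ?thesis using finite_subformulas finite_subset by blast
qed

primrec layer :: "nat \<Rightarrow> 'v fm set list set" where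
  "layer 0 = witness_closure BS {[G0]}"
| "layer (Suc k) = witness_closure BS (next_path ` layer k)"

lemma mcs_path_layer: "p \<in> layer k \<Longrightarrow> mcs_path p"
proof (induction k arbitrary: p)
  case 0
  have "mcs_path [G0]" using mcs_G0 by (simp add: mcs_path_def)
  then show ?case using 0 mcs_path_witness_closure by auto
next
  case (Suc k)
  then have "\<forall>q\<in>next_path ` layer k. mcs_path q" using mcs_path_next_path by blast
  with Suc.prems show ?case by (simp add: mcs_path_witness_closure)
qed

lemma finite_layer: "finite (layer k)"
proof (induction k)
  case 0
  have "mcs_path [G0]" using mcs_G0 by (simp add: mcs_path_def)
  then show ?case using finite_witness_closure[of "{[G0]}", OF _ _ finite_BS] by auto
next
  case (Suc k)
  then show ?case
    using finite_witness_closure[OF _ _ finite_BS] mcs_path_layer mcs_path_next_path by auto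
qed

text \<open>A world \<open>(k, p)\<close> represents the maximal consistent set \<open>hd p\<close> at time \<open>k\<close>. Beyond the
  last layer the dynamics is the identity; this is harmless since the truth lemma only looks
  \<open>next_depth \<phi>\<close> steps ahead.\<close>
definition worlds :: "(nat \<times> 'v fm set list) set" where
  "worlds = Sigma {..next_depth \<phi>} layer"

definition rel :: "nat \<times> 'v fm set list \<Rightarrow> nat \<times> 'v fm set list \<Rightarrow> bool" where
  "rel x y \<longleftrightarrow> fst x = fst y \<and> strict_suffix (snd x) (snd y)"

definition dyn :: "nat \<times> 'v fm set list \<Rightarrow> nat \<times> 'v fm set list" where
  "dyn x = (if fst x < next_depth \<phi> then (Suc (fst x), next_path (snd x)) else x)"

definition val :: "'v \<Rightarrow> (nat \<times> 'v fm set list) set" where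
  "val v = {x. Var v \<in> hd (snd x)}"

lemma finite_dynamic_GL_frame: "finite_dynamic_GL_frame worlds rel dyn"
proof -
  have "(0, [G0]) \<in> worlds" unfolding worlds_def by (auto intro: witness_closure.base)
  moreover have "\<forall>x\<in>worlds. dyn x \<in> worlds"
    unfolding worlds_def dyn_def by (auto intro: witness_closure.base)
  moreover have "dyn x = dyn y \<or> rel (dyn x) (dyn y)" if "rel x y" for x y
  proof -
    obtain k p q where "x = (k, p)" "y = (k, q)" "strict_suffix p q"
      using \<open>rel x y\<close> unfolding rel_def by (metis prod.collapse)
    moreover have "suffix (next_path p) (next_path q)"
      using \<open>strict_suffix p q\<close> by (simp add: strict_suffix_def suffix_next_path)
    ultimately show ?thesis unfolding dyn_def rel_def strict_suffix_def by auto
  qed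
  moreover have "finite worlds" unfolding worlds_def using finite_layer by blast
  moreover have "rel x z" if "rel x y" "rel y z" for x y z
    using that unfolding rel_def by (auto intro: suffix_order.strict_trans)
  moreover have "\<not> rel x x" for x unfolding rel_def by simp
  ultimately show ?thesis
    unfolding finite_dynamic_GL_frame_def dynamic_frame_def by blast
qed

lemma truth_lemma:
  assumes "subformulas \<psi> \<subseteq> subformulas \<phi>" and "p \<in> layer k"
    and "next_depth \<psi> + k \<le> next_depth \<phi>"
  shows "sat worlds rel dyn val (k, p) \<psi> \<longleftrightarrow> \<psi> \<in> hd p"
  using assms
proof (induction \<psi> arbitrary: k p)
  case (Var x)
  then show ?case by (simp add: val_def)
next
  case (And a b)
  then show ?case using mcs_path_layer by (auto simp: mcs_path_def)
next
  case (Neg a)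
  then show ?case using mcs_path_layer by (auto simp: mcs_path_def)
next
  case (Box a)
  have p: "mcs_path p" using Box.prems(2) mcs_path_layer by blast
  then have mcs: "mcs (hd p)" by (simp add: mcs_path_def)
  have IH: "sat worlds rel dyn val (k, q) a \<longleftrightarrow> a \<in> hd q" if "q \<in> layer k" for q
    using Box that by simp
  show ?case
  proof
    assume sat: "sat worlds rel dyn val (k, p) (Box a)"
    show "Box a \<in> hd p"
    proof (rule ccontr)
      assume "Box a \<notin> hd p"
      moreover have "a \<in> BS" using Box.prems(1) by (simp add: BS_def)
      ultimately have q: "witness (hd p) a # p \<in> layer k"
        using Box.prems(2) by (cases k) (auto intro: witness_closure.step)
      then have "(k, witness (hd p) a # p) \<in> worlds" using Box.prems(3) by (simp add: worlds_def)
      moreover have "rel (k, p) (k, witness (hd p) a # p)"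
        by (simp add: rel_def strict_suffix_def suffix_def)
      ultimately have "a \<in> witness (hd p) a" using sat IH[OF q] by simp
      then show False using witness_spec(4)[OF mcs \<open>Box a \<notin> hd p\<close>] by blast
    qed
  next
    assume "Box a \<in> hd p"
    have "a \<in> hd q" if "q \<in> layer k" "strict_suffix p q" for q
      using \<open>Box a \<in> hd p\<close> mcs_path_hd_strict_suffix[of q p] mcs_path_layer p that
      unfolding canon_rel_def mcs_path_def by blast
    then show "sat worlds rel dyn val (k, p) (Box a)"
      using IH by (auto simp: worlds_def rel_def)
  qed
next
  case (Next a)
  have "p \<noteq> []" using Next.prems(2) mcs_path_layer by (auto simp: mcs_path_def)
  moreover have "k < next_depth \<phi>" using Next.prems(3) by simp
  moreover have "next_path p \<in> layer (Suc k)"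
    using Next.prems(2) by (auto intro: witness_closure.base)
  ultimately show ?case using Next by (simp add: dyn_def hd_next_path next_set_def)
qed

lemma countermodel:
  assumes "\<phi> \<notin> G0"
  shows "\<not> valid_on worlds rel dyn \<phi>"
proof -
  have "[G0] \<in> layer 0" by (auto intro: witness_closure.base)
  then have "\<not> sat worlds rel dyn val (0, [G0]) \<phi>" using truth_lemma[of \<phi>] assms by simp
  moreover have "(0, [G0]) \<in> worlds" using \<open>[G0] \<in> layer 0\<close> by (simp add: worlds_def)
  ultimately show ?thesis unfolding valid_on_def by blast
qed

end

theorem completeness:
  assumes "\<not> GLC \<phi>"
  shows "\<exists>(W :: nat set) R f. finite_dynamic_GL_frame W R f \<and> \<not> valid_on W R f \<phi>"
proof -
  obtain G0 where "{Neg \<phi>} \<subseteq> G0" "mcs G0"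
    using lindenbaum[OF consistent_Neg[OF assms]] by blast
  then interpret canonical_countermodel G0 \<phi> by unfold_locales
  have "\<not> valid_on worlds rel dyn \<phi>" using countermodel \<open>{Neg \<phi>} \<subseteq> G0\<close> \<open>mcs G0\<close> by simp
  then show ?thesis using refuted_on_nat_frame[OF finite_dynamic_GL_frame] by blast
qed

theorem mainTheorem6:
  fixes \<phi> :: "'v fm"
  shows "GLC \<phi> \<longleftrightarrow>
    (\<forall>(W :: nat set) R f. finite_dynamic_GL_frame W R f \<longrightarrow> valid_on W R f \<phi>)"
  using soundness completeness by blast

end
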